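(* Let $b\in\mathbb{Z}^+$ be odd. Then for all complex $q$ with $|q|<1$, $$\sum_{n=0}^{\infty}N(3,5,4b;8n+9)q^n=4q^{\frac{b-1}2}\varphi(q^6)\psi(q^5)\psi(q^{4b})+4q\varphi(q^{2b})\psi(q^5)\psi(q^{12}).$$
   Context: $\mathbb{Z}^+$ is the set of positive integers. For $a,b,c\in\mathbb{Z}^+$ and nonnegative integer $n$, $N(a,b,c;n)$ denotes the number of triples $(x,y,z)\in\mathbb{Z}^3$ with $n=ax^2+by^2+cz^2$. Ramanujan's theta functions are $\varphi(q)=\sum_{n=-\infty}^{\infty}q^{n^2}$ and $\psi(q)=\sum_{n=0}^{\infty}q^{n(n+1)/2}$ for $|q|<1$. *)

theory Defs
  imports "HOL-Analysis.Analysis"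
begin

definition N3 :: "nat \<Rightarrow> nat \<Rightarrow> nat \<Rightarrow> nat \<Rightarrow> nat" where
  "N3 a b c n = card {(x :: int, y :: int, z :: int).
      int n = int a * x^2 + int b * y^2 + int c * z^2}"

definition ram_phi :: "complex \<Rightarrow> complex" where
  "ram_phi q = (\<Sum>\<^sub>\<infinity> n :: int. q ^ nat (n^2))"

definition ram_psi :: "complex \<Rightarrow> complex" where
  "ram_psi q = (\<Sum>n. q ^ (n * (n + 1) div 2))"

end

(* Modulo 8, a solution of 3x^2 + 5y^2 + 4bz^2 = 8n + 9 has y odd and x even, and since b is odd,
   x/2 and z have opposite parity. So the solutions are exactly (4u, 2v + 1, 2w + 1) with
   n = (b - 1)/2 + 6u^2 + 5T(v) + 4bT(w), and (4u + 2, 2v + 1, 2w) with n = 1 + 12T(u) + 5T(v) + 2bw^2,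
   where u, v, w range over the integers and T(m) = m(m + 1)/2. Summed over the integers, q^(m^2) gives
   phi(q) and, because T(-m - 1) = T(m), q^T(m) gives 2 psi(q); so the generating function of each
   family is a product of three theta series. *)

theory Submission
  imports Defs
begin

lemma has_sum_power_exponent_ge:
  fixes w :: complex and e :: "nat \<Rightarrow> nat"
  assumes "norm w < 1" and "\<And>n. n \<le> e n"
  shows "((\<lambda>n. w ^ e n) has_sum (\<Sum>n. w ^ e n)) UNIV"
proof -
  have norm_summable: "summable (\<lambda>n. norm (w ^ e n))"
  proof (rule summable_comparison_test)
    show "\<exists>N. \<forall>n\<ge>N. norm (norm (w ^ e n)) \<le> norm w ^ n"
      using assms by (auto simp: norm_power intro!: power_decreasing)
    show "summable (\<lambda>n. norm w ^ n)"
      using assms by (simp add: summable_geometric)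
  qed
  then show ?thesis
    by (simp add: norm_summable_imp_has_sum summable_norm_cancel summable_sums)
qed

lemma has_sum_int_split:
  fixes f :: "int \<Rightarrow> 'a::topological_comm_monoid_add"
  assumes "((\<lambda>n. f (int n)) has_sum a) UNIV" and "((\<lambda>n. f (- int n - 1)) has_sum c) UNIV"
  shows "(f has_sum (a + c)) UNIV"
proof -
  have "(f has_sum a) (range int)"
    using assms(1) by (simp add: has_sum_reindex o_def)
  moreover have "(f has_sum c) (range (\<lambda>n. - int n - 1))"
    using assms(2) by (simp add: has_sum_reindex o_def inj_on_def)
  moreover have "range int \<union> range (\<lambda>n. - int n - 1) = UNIV"
  proof -
    have "x \<in> range int \<union> range (\<lambda>n. - int n - 1)" for x :: int
      by (cases "x \<ge> 0") (auto simp: image_iff intro: exI[of _ "nat x"] exI[of _ "nat (- x - 1)"])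
    then show ?thesis by blast
  qed
  moreover have "range int \<inter> range (\<lambda>n. - int n - 1) = {}"
    by auto
  ultimately show ?thesis
    by (metis has_sum_Un_disjoint)
qed

lemma has_sum_mult_Times:
  fixes f :: "'a \<Rightarrow> complex" and g :: "'b \<Rightarrow> complex"
  assumes f: "(f has_sum a) A" and g: "(g has_sum c) B"
  shows "((\<lambda>(x, y). f x * g y) has_sum a * c) (A \<times> B)"
proof (rule has_sum_SigmaI)
  show "((\<lambda>y. (\<lambda>(x, y). f x * g y) (x, y)) has_sum f x * c) B" for x
    using has_sum_cmult_right[OF g] by simp
  show "((\<lambda>x. f x * c) has_sum a * c) A"
    using has_sum_cmult_left[OF f] .
  have f_abs: "(\<lambda>x. norm (f x)) summable_on A" and g_abs: "(\<lambda>y. norm (g y)) summable_on B"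
    using f g summable_on_iff_abs_summable_on_complex has_sum_imp_summable by blast+
  have "(\<lambda>p. norm ((\<lambda>(x, y). f x * g y) p)) summable_on A \<times> B"
  proof (rule iffD2[OF Infinite_Sum.abs_summable_on_Sigma_iff], intro conjI ballI)
    show "(\<lambda>y. norm ((\<lambda>(x, y). f x * g y) (x, y))) summable_on B" for x
      using summable_on_cmult_right[OF g_abs, of "norm (f x)"] by (simp add: norm_mult)
    show "(\<lambda>x. norm (\<Sum>\<^sub>\<infinity>y\<in>B. norm ((\<lambda>(x, y). f x * g y) (x, y)))) summable_on A"
      using summable_on_cmult_left[OF f_abs, of "\<Sum>\<^sub>\<infinity>y\<in>B. norm (g y)"]
      by (simp add: norm_mult infsum_cmult_right' infsum_nonneg)
  qed
  then show "(\<lambda>(x, y). f x * g y) summable_on A \<times> B"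
    using summable_on_iff_abs_summable_on_complex by blast
qed

lemma has_sum_power_add_triple:
  fixes q :: complex
  assumes "((\<lambda>u. q ^ f u) has_sum F) UNIV" and "((\<lambda>v. q ^ g v) has_sum G) UNIV"
    and "((\<lambda>w. q ^ h w) has_sum H) UNIV"
  shows "((\<lambda>(u, v, w). q ^ (k + f u + g v + h w)) has_sum q ^ k * (F * (G * H))) UNIV"
proof -
  have "((\<lambda>(u, v, w). q ^ f u * (q ^ g v * q ^ h w)) has_sum F * (G * H)) UNIV"
    using has_sum_mult_Times[OF assms(1) has_sum_mult_Times[OF assms(2,3)]]
    by (simp add: case_prod_unfold)
  from has_sum_cmult_right[OF this, of "q ^ k"] show ?thesis
    by (simp add: power_add case_prod_unfold mult_ac)
qed

lemma sums_card_fibres: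
  fixes g :: "'a \<Rightarrow> nat" and c :: "nat \<Rightarrow> 'b::{topological_comm_monoid_add, t3_space, semiring_1}"
  assumes "\<And>n. finite {x. g x = n}" and "((\<lambda>x. c (g x)) has_sum s) UNIV"
  shows "(\<lambda>n. of_nat (card {x. g x = n}) * c n) sums s"
proof -
  have "bij_betw (\<lambda>x. (g x, x)) UNIV (SIGMA n:UNIV. {x. g x = n})"
    by (auto simp: bij_betw_def inj_on_def)
  then have "((\<lambda>(n, x). c n) has_sum s) (SIGMA n:UNIV. {x. g x = n})"
    using assms(2) by (simp add: has_sum_reindex_bij_betw[symmetric])
  then have "((\<lambda>n. of_nat (card {x. g x = n}) * c n) has_sum s) UNIV"
  proof (rule has_sum_SigmaD)
    show "((\<lambda>x. (\<lambda>(n, x). c n) (n, x)) has_sum of_nat (card {x. g x = n}) * c n) {x. g x = n}" for n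
      using has_sum_finite[OF assms(1), of "\<lambda>_. c n"] by simp
  qed
  then show ?thesis
    by (rule has_sum_imp_sums)
qed

lemma has_sum_ram_phi:
  assumes "norm w < 1"
  shows "((\<lambda>n::int. w ^ nat (n\<^sup>2)) has_sum ram_phi w) UNIV"
proof -
  have "((\<lambda>n. w ^ nat ((int n)\<^sup>2)) has_sum (\<Sum>n. w ^ n\<^sup>2)) UNIV"
    using has_sum_power_exponent_ge[OF assms, of "\<lambda>n. n\<^sup>2"]
    by (simp add: nat_power_eq power2_nat_le_imp_le)
  moreover have "((\<lambda>n. w ^ nat ((- int n - 1)\<^sup>2)) has_sum (\<Sum>n. w ^ (n + 1)\<^sup>2)) UNIV"
  proof -
    have "nat ((- int n - 1)\<^sup>2) = (n + 1)\<^sup>2" for n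
      by (simp add: power2_eq_square algebra_simps nat_mult_distrib nat_add_distrib)
    then show ?thesis
      using has_sum_power_exponent_ge[OF assms, of "\<lambda>n. (n + 1)\<^sup>2"]
      by (simp add: power2_nat_le_imp_le)
  qed
  ultimately have "((\<lambda>n::int. w ^ nat (n\<^sup>2)) has_sum (\<Sum>n. w ^ n\<^sup>2) + (\<Sum>n. w ^ (n + 1)\<^sup>2)) UNIV"
    by (rule has_sum_int_split)
  then show ?thesis
    unfolding ram_phi_def by (intro has_sum_infsum has_sum_imp_summable)
qed

definition triangular :: "int \<Rightarrow> nat" where
  "triangular m = nat (m * (m + 1) div 2)"

lemma two_times_triangular: "2 * int (triangular m) = m * (m + 1)"
proof -
  have "m * (m + 1) \<ge> 0"
    by (cases "m \<ge> 0") (auto intro: mult_nonpos_nonpos)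
  then show ?thesis
    unfolding triangular_def by simp
qed

lemma triangular_of_nat: "triangular (int n) = n * (n + 1) div 2"
proof -
  have "int n * (int n + 1) div 2 = int (n * (n + 1) div 2)"
    by (metis of_nat_1 of_nat_add of_nat_mult of_nat_numeral zdiv_int)
  then show ?thesis
    unfolding triangular_def by simp
qed

lemma triangular_reflect: "triangular (- m - 1) = triangular m"
  unfolding triangular_def by (simp add: algebra_simps)

lemma has_sum_ram_psi_int:
  assumes "norm w < 1"
  shows "((\<lambda>m::int. w ^ triangular m) has_sum 2 * ram_psi w) UNIV"
proof -
  have nonneg: "((\<lambda>n. w ^ triangular (int n)) has_sum ram_psi w) UNIV"
    unfolding ram_psi_def triangular_of_nat
  proof (rule has_sum_power_exponent_ge[OF assms])
    show "n \<le> n * (n + 1) div 2" for n :: nat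
      by (cases n) auto
  qed
  moreover have "((\<lambda>n. w ^ triangular (- int n - 1)) has_sum ram_psi w) UNIV"
    using nonneg by (simp only: triangular_reflect)
  ultimately have "((\<lambda>m. w ^ triangular m) has_sum (ram_psi w + ram_psi w)) UNIV"
    by (rule has_sum_int_split)
  then show ?thesis
    by (simp only: mult_2)
qed

lemma has_sum_ram_phi_power:
  assumes "norm q < 1" and "k > 0"
  shows "((\<lambda>u. q ^ (k * nat (u\<^sup>2))) has_sum ram_phi (q ^ k)) UNIV"
  using has_sum_ram_phi[of "q ^ k"] assms by (simp add: norm_power power_less_one_iff power_mult)

lemma has_sum_ram_psi_power:
  assumes "norm q < 1" and "k > 0"
  shows "((\<lambda>u. q ^ (k * triangular u)) has_sum 2 * ram_psi (q ^ k)) UNIV"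
  using has_sum_ram_psi_int[of "q ^ k"] assms by (simp add: norm_power power_less_one_iff power_mult)

definition reps :: "nat \<Rightarrow> nat \<Rightarrow> nat \<Rightarrow> nat \<Rightarrow> (int \<times> int \<times> int) set" where
  "reps a b c n = {(x, y, z). int n = int a * x\<^sup>2 + int b * y\<^sup>2 + int c * z\<^sup>2}"

lemma int_abs_le_square: "\<bar>x\<bar> \<le> (x::int)\<^sup>2"
proof (cases "x = 0")
  case False
  then have "\<bar>x\<bar> * 1 \<le> \<bar>x\<bar> * \<bar>x\<bar>"
    by (intro mult_left_mono) auto
  then show ?thesis
    by (simp add: power2_eq_square)
qed simp

lemma finite_reps:
  assumes "a > 0" and "b > 0" and "c > 0"
  shows "finite (reps a b c n)"
proof (rule finite_subset)
  let ?I = "{- int n..int n}"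
  show "reps a b c n \<subseteq> ?I \<times> ?I \<times> ?I"
  proof
    fix t assume "t \<in> reps a b c n"
    then obtain x y z where t: "t = (x, y, z)"
      and n: "int n = int a * x\<^sup>2 + int b * y\<^sup>2 + int c * z\<^sup>2"
      by (auto simp: reps_def)
    have "x\<^sup>2 \<le> int a * x\<^sup>2" "y\<^sup>2 \<le> int b * y\<^sup>2" "z\<^sup>2 \<le> int c * z\<^sup>2"
      using assms by (simp_all add: mult_le_cancel_right1)
    moreover have "0 \<le> int a * x\<^sup>2" "0 \<le> int b * y\<^sup>2" "0 \<le> int c * z\<^sup>2"
      by simp_all
    ultimately have "\<bar>x\<bar> \<le> int n" "\<bar>y\<bar> \<le> int n" "\<bar>z\<bar> \<le> int n"
      using n int_abs_le_square[of x] int_abs_le_square[of y] int_abs_le_square[of z] by linarith+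
    then show "t \<in> ?I \<times> ?I \<times> ?I"
      by (simp add: t abs_le_iff)
  qed
qed simp

definition param_z_odd :: "int \<times> int \<times> int \<Rightarrow> int \<times> int \<times> int" where
  "param_z_odd = (\<lambda>(u, v, w). (4 * u, 2 * v + 1, 2 * w + 1))"

definition param_z_even :: "int \<times> int \<times> int \<Rightarrow> int \<times> int \<times> int" where
  "param_z_even = (\<lambda>(u, v, w). (4 * u + 2, 2 * v + 1, 2 * w))"

definition level_z_odd :: "nat \<Rightarrow> int \<times> int \<times> int \<Rightarrow> nat" where
  "level_z_odd b = (\<lambda>(u, v, w). (b - 1) div 2 + 6 * nat (u\<^sup>2) + 5 * triangular v + 4 * b * triangular w)"

definition level_z_even :: "nat \<Rightarrow> int \<times> int \<times> int \<Rightarrow> nat" where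
  "level_z_even b = (\<lambda>(u, v, w). 1 + 12 * triangular u + 5 * triangular v + 2 * b * nat (w\<^sup>2))"

lemma param_z_odd_mem_reps:
  assumes "odd b"
  shows "param_z_odd p \<in> reps 3 5 (4 * b) (8 * level_z_odd b p + 9)"
proof -
  obtain c where b: "b = 2 * c + 1"
    using assms by (rule oddE)
  then have b_int: "int b = 2 * int c + 1"
    by simp
  obtain u v w where p: "p = (u, v, w)"
    by (rule prod_cases3)
  have "int (8 * level_z_odd b p + 9) = 8 * (int c + 6 * u\<^sup>2 + 5 * int (triangular v) + 4 * int b * int (triangular w)) + 9"
    by (simp add: level_z_odd_def p b)
  also have "\<dots> = 3 * (4 * u)\<^sup>2 + 5 * (2 * v + 1)\<^sup>2 + 4 * int b * (2 * w + 1)\<^sup>2"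
    using two_times_triangular[of v] two_times_triangular[of w] b_int by algebra
  finally show ?thesis
    by (simp add: reps_def param_z_odd_def p)
qed

lemma param_z_even_mem_reps:
  "param_z_even p \<in> reps 3 5 (4 * b) (8 * level_z_even b p + 9)"
proof -
  obtain u v w where p: "p = (u, v, w)"
    by (rule prod_cases3)
  have "int (8 * level_z_even b p + 9) = 8 * (1 + 12 * int (triangular u) + 5 * int (triangular v) + 2 * int b * w\<^sup>2) + 9"
    by (simp add: level_z_even_def p)
  also have "\<dots> = 3 * (4 * u + 2)\<^sup>2 + 5 * (2 * v + 1)\<^sup>2 + 4 * int b * (2 * w)\<^sup>2"
    using two_times_triangular[of u] two_times_triangular[of v] by (simp add: algebra_simps power2_eq_square)
  finally show ?thesis
    by (simp add: reps_def param_z_even_def p)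
qed

lemma reps_3_5_4b_cases:
  assumes "odd b" and "(x, y, z) \<in> reps 3 5 (4 * b) (8 * n + 9)"
  shows "(x, y, z) \<in> range param_z_odd \<union> range param_z_even"
proof -
  have eq: "3 * x\<^sup>2 + 5 * y\<^sup>2 + 4 * int b * z\<^sup>2 = 8 * int n + 9"
    using assms(2) by (simp add: reps_def)
  then have "odd (3 * x\<^sup>2 + 5 * y\<^sup>2 + 4 * int b * z\<^sup>2)"
    by simp
  then have parity: "odd (3 * x\<^sup>2 + 5 * y\<^sup>2)"
    by simp
  have "odd y"
  proof
    assume "even y"
    then obtain y' where y: "y = 2 * y'" ..
    from parity \<open>even y\<close> have "odd x"
      by simp
    then obtain x' where x: "x = 2 * x' + 1" ..
    have "4 * (3 * x'\<^sup>2 + 3 * x' + 5 * y'\<^sup>2 + int b * z\<^sup>2) = 8 * int n + 6"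
      using eq unfolding x y by algebra
    then show False
      by presburger
  qed
  then obtain v where y: "y = 2 * v + 1" ..
  from parity \<open>odd y\<close> have "even x"
    by simp
  then obtain a where x: "x = 2 * a" ..
  have "4 * (3 * a\<^sup>2 + 10 * int (triangular v) + int b * z\<^sup>2) = 4 * (2 * int n + 1)"
    using eq two_times_triangular[of v] unfolding x y by algebra
  then have "3 * a\<^sup>2 + 10 * int (triangular v) + int b * z\<^sup>2 = 2 * int n + 1"
    by simp
  then have "odd (3 * a\<^sup>2 + 10 * int (triangular v) + int b * z\<^sup>2)"
    by simp
  then have a_z: "even a \<longleftrightarrow> odd z"
    using assms(1) by simp
  show ?thesis
  proof (cases "even a")
    case True
    then obtain u where "a = 2 * u" ..
    moreover obtain w where "z = 2 * w + 1"
      using True a_z by (auto elim: oddE)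
    ultimately have "(x, y, z) = param_z_odd (u, v, w)"
      by (simp add: param_z_odd_def x y)
    then show ?thesis
      by blast
  next
    case False
    then obtain u where "a = 2 * u + 1"
      by (auto elim: oddE)
    moreover obtain w where "z = 2 * w"
      using False a_z by (auto elim: evenE)
    ultimately have "(x, y, z) = param_z_even (u, v, w)"
      by (simp add: param_z_even_def x y)
    then show ?thesis
      by blast
  qed
qed

lemma reps_3_5_4b_eq:
  assumes "odd b"
  shows "reps 3 5 (4 * b) (8 * n + 9) =
    param_z_odd ` {p. level_z_odd b p = n} \<union> param_z_even ` {p. level_z_even b p = n}"
proof
  have level_unique: "m = n" if "t \<in> reps 3 5 (4 * b) (8 * m + 9)" "t \<in> reps 3 5 (4 * b) (8 * n + 9)" for t m
    using that by (auto simp: reps_def)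
  show "reps 3 5 (4 * b) (8 * n + 9) \<subseteq>
      param_z_odd ` {p. level_z_odd b p = n} \<union> param_z_even ` {p. level_z_even b p = n}"
  proof
    fix t assume t: "t \<in> reps 3 5 (4 * b) (8 * n + 9)"
    with reps_3_5_4b_cases[OF assms] have "t \<in> range param_z_odd \<union> range param_z_even"
      by (cases t) blast
    with t show "t \<in> param_z_odd ` {p. level_z_odd b p = n} \<union> param_z_even ` {p. level_z_even b p = n}"
      using level_unique param_z_odd_mem_reps[OF assms] param_z_even_mem_reps by blast
  qed
  show "param_z_odd ` {p. level_z_odd b p = n} \<union> param_z_even ` {p. level_z_even b p = n}
      \<subseteq> reps 3 5 (4 * b) (8 * n + 9)"
    using param_z_odd_mem_reps[OF assms] param_z_even_mem_reps by blast
qed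

lemma inj_param_z_odd: "inj param_z_odd"
  unfolding param_z_odd_def inj_def by auto

lemma inj_param_z_even: "inj param_z_even"
  unfolding param_z_even_def inj_def by auto

lemma param_z_odd_neq_param_z_even: "param_z_odd p \<noteq> param_z_even p'"
proof -
  have "4 * u \<noteq> 4 * u' + (2::int)" for u u'
    by presburger
  then show ?thesis
    by (auto simp: param_z_odd_def param_z_even_def split: prod.splits)
qed

lemma finite_level_fibres:
  assumes "odd b"
  shows "finite {p. level_z_odd b p = n}" and "finite {p. level_z_even b p = n}"
proof -
  have "finite (reps 3 5 (4 * b) (8 * n + 9))"
    using assms by (intro finite_reps) (auto intro: odd_pos)
  then show "finite {p. level_z_odd b p = n}" and "finite {p. level_z_even b p = n}"
    using inj_param_z_odd inj_param_z_even
    by (auto simp: reps_3_5_4b_eq[OF assms] finite_image_iff inj_on_subset)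
qed

lemma N3_3_5_4b_eq_card_levels:
  assumes "odd b"
  shows "N3 3 5 (4 * b) (8 * n + 9) = card {p. level_z_odd b p = n} + card {p. level_z_even b p = n}"
proof -
  have "N3 3 5 (4 * b) (8 * n + 9) = card (reps 3 5 (4 * b) (8 * n + 9))"
    by (simp add: N3_def reps_def)
  also have "\<dots> = card (param_z_odd ` {p. level_z_odd b p = n}) + card (param_z_even ` {p. level_z_even b p = n})"
    unfolding reps_3_5_4b_eq[OF assms]
    using finite_level_fibres[OF assms] param_z_odd_neq_param_z_even[THEN not_sym]
    by (intro card_Un_disjoint) auto
  also have "\<dots> = card {p. level_z_odd b p = n} + card {p. level_z_even b p = n}"
    using inj_param_z_odd inj_param_z_even by (simp add: card_image inj_on_subset)
  finally show ?thesis .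
qed

lemma sums_card_level_z_odd:
  assumes "odd b" and "norm q < 1"
  shows "(\<lambda>n. of_nat (card {p. level_z_odd b p = n}) * q ^ n) sums
    (q ^ ((b - 1) div 2) * (ram_phi (q ^ 6) * (2 * ram_psi (q ^ 5) * (2 * ram_psi (q ^ (4 * b))))))"
proof (rule sums_card_fibres)
  show "finite {p. level_z_odd b p = n}" for n
    using finite_level_fibres(1)[OF assms(1)] .
  have "((\<lambda>(u, v, w). q ^ ((b - 1) div 2 + 6 * nat (u\<^sup>2) + 5 * triangular v + 4 * b * triangular w))
      has_sum q ^ ((b - 1) div 2) * (ram_phi (q ^ 6) * (2 * ram_psi (q ^ 5) * (2 * ram_psi (q ^ (4 * b)))))) UNIV"
    using assms by (intro has_sum_power_add_triple has_sum_ram_phi_power has_sum_ram_psi_power) (auto intro: odd_pos)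
  then show "((\<lambda>p. q ^ level_z_odd b p) has_sum
      q ^ ((b - 1) div 2) * (ram_phi (q ^ 6) * (2 * ram_psi (q ^ 5) * (2 * ram_psi (q ^ (4 * b)))))) UNIV"
    by (simp add: level_z_odd_def case_prod_unfold)
qed

lemma sums_card_level_z_even:
  assumes "odd b" and "norm q < 1"
  shows "(\<lambda>n. of_nat (card {p. level_z_even b p = n}) * q ^ n) sums
    (q * (2 * ram_psi (q ^ 12) * (2 * ram_psi (q ^ 5) * ram_phi (q ^ (2 * b)))))"
proof (rule sums_card_fibres)
  show "finite {p. level_z_even b p = n}" for n
    using finite_level_fibres(2)[OF assms(1)] .
  have "((\<lambda>(u, v, w). q ^ (1 + 12 * triangular u + 5 * triangular v + 2 * b * nat (w\<^sup>2)))
      has_sum q ^ 1 * (2 * ram_psi (q ^ 12) * (2 * ram_psi (q ^ 5) * ram_phi (q ^ (2 * b))))) UNIV"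
    using assms by (intro has_sum_power_add_triple has_sum_ram_phi_power has_sum_ram_psi_power) (auto intro: odd_pos)
  then show "((\<lambda>p. q ^ level_z_even b p) has_sum
      q * (2 * ram_psi (q ^ 12) * (2 * ram_psi (q ^ 5) * ram_phi (q ^ (2 * b))))) UNIV"
    by (simp add: level_z_even_def case_prod_unfold)
qed

theorem lemma6p4:
  fixes b :: nat and q :: complex
  assumes "b > 0" and "odd b" and "norm q < 1"
  shows "(\<Sum>n. of_nat (N3 3 5 (4 * b) (8 * n + 9)) * q ^ n) =
    4 * q ^ ((b - 1) div 2) * ram_phi (q ^ 6) * ram_psi (q ^ 5) * ram_psi (q ^ (4 * b))
    + 4 * q * ram_phi (q ^ (2 * b)) * ram_psi (q ^ 5) * ram_psi (q ^ 12)"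
proof -
  have "(\<lambda>n. of_nat (N3 3 5 (4 * b) (8 * n + 9)) * q ^ n) sums
      (q ^ ((b - 1) div 2) * (ram_phi (q ^ 6) * (2 * ram_psi (q ^ 5) * (2 * ram_psi (q ^ (4 * b)))))
       + q * (2 * ram_psi (q ^ 12) * (2 * ram_psi (q ^ 5) * ram_phi (q ^ (2 * b)))))"
    using sums_add[OF sums_card_level_z_odd[OF assms(2,3)] sums_card_level_z_even[OF assms(2,3)]]
    by (simp add: N3_3_5_4b_eq_card_levels[OF assms(2)] distrib_right)
  then show ?thesis
    by (simp add: sums_iff algebra_simps)
qed

end
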